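(* Let $N, M \in \mathbb{Z}^{+}$. Let $(\mathbf{a},\mathbf{b})$ be a Golay complementary pair of length $N$ and let $(\mathbf{c},\mathbf{d})$ be a Golay complementary pair of length $M$, all with complex entries. Let $\xi_1,\xi_2 \in \mathbb{C}$ with $|\xi_1| = |\xi_2| = 1$, and let $k, l, m \in \mathbb{Z}$. Define the sequences $\mathbf{f}$ and $\mathbf{g}$ through their polynomial representations $$p_{\mathbf{f}}(z) = \xi_1\, p_{\mathbf{a}}(z^k)\, p_{\mathbf{c}}(z^l) + \xi_2\, p_{\mathbf{b}}(z^k)\, p_{\mathbf{d}}(z^l)\, z^{m},$$ $$p_{\mathbf{g}}(z) = \xi_1\, p_{\mathbf{a}}(z^k)\, p_{\tilde{\mathbf{d}}}(z^l) - \xi_2\, p_{\mathbf{b}}(z^k)\, p_{\tilde{\mathbf{c}}}(z^l)\, z^{m}.$$ Then $(\mathbf{f},\mathbf{g})$ is a Golay complementary pair.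
   Context: For a sequence $\mathbf{a} = (a_0, a_1, \dots, a_{N-1})$ of complex numbers, its polynomial representation is $p_{\mathbf{a}}(z) = a_{N-1}z^{N-1} + \dots + a_1 z + a_0$ for $z \in \mathbb{C}$ (nonzero when negative powers occur). More generally, a finitely supported complex sequence $(x_i)_{i\in\mathbb{Z}}$ is identified with the Laurent polynomial $p_{\mathbf{x}}(z)=\sum_i x_i z^i$; when $k,l,m$ may be negative, $\mathbf{f}$ and $\mathbf{g}$ denote the (finitely supported, $\mathbb{Z}$-indexed) coefficient sequences of the Laurent polynomials above. For a sequence $\mathbf{a}=(a_0,\dots,a_{N-1})$, $\tilde{\mathbf{a}} = (a_{N-1}^*, a_{N-2}^*, \dots, a_0^* )$ denotes the sequence reversed in order and element-wise complex conjugated. The aperiodic autocorrelation of a finitely supported sequence $\mathbf{x}$ is $\rho_{\mathbf{x}}(j) = \sum_{i} x_i^* x_{i+j}$ for $j\in\mathbb{Z}$ (for a sequence of length $N$ indexed $0,\dots,N-1$ this is $\sum_{i=0}^{N-j-1} a_i^* a_{i+j}$ for $0\le j\le N-1$, $\rho_{\mathbf{a}}(-j)=\rho_{\mathbf{a}}(j)^*$, and $0$ otherwise). A pair of sequences $(\mathbf{x},\mathbf{y})$ is a Golay complementary pair if $\rho_{\mathbf{x}}(j) + \rho_{\mathbf{y}}(j) = 0$ for all $j \neq 0$; equivalently, $|p_{\mathbf{x}}(z)|^2 + |p_{\mathbf{y}}(z)|^2$ is constant for all $z$ on the unit circle. A Golay complementary pair "of length $N$" consists of two sequences each of length $N$.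 *)

theory Defs
  imports Complex_Main
begin

definition supp_seq :: "(int \<Rightarrow> complex) \<Rightarrow> int set" where
  "supp_seq x = {i. x i \<noteq> 0}"

definition fin_supp :: "(int \<Rightarrow> complex) \<Rightarrow> bool" where
  "fin_supp x \<longleftrightarrow> finite (supp_seq x)"

definition lpoly :: "(int \<Rightarrow> complex) \<Rightarrow> complex \<Rightarrow> complex" where
  "lpoly x z = (\<Sum>i\<in>supp_seq x. x i * z powi i)"

definition acorr :: "(int \<Rightarrow> complex) \<Rightarrow> int \<Rightarrow> complex" where
  "acorr x j = (\<Sum>i\<in>supp_seq x. cnj (x i) * x (i + j))"

definition golay_pair :: "(int \<Rightarrow> complex) \<Rightarrow> (int \<Rightarrow> complex) \<Rightarrow> bool" where
  "golay_pair x y \<longleftrightarrow> (\<forall>j. j \<noteq> 0 \<longrightarrow> acorr x j + acorr y j = 0)"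

text \<open>A length-N sequence (a_0,...,a_(N-1)) given by a :: nat => complex
  (only the entries below N matter), viewed as a Z-indexed sequence.\<close>
definition seq_of :: "nat \<Rightarrow> (nat \<Rightarrow> complex) \<Rightarrow> int \<Rightarrow> complex" where
  "seq_of N a = (\<lambda>i. if 0 \<le> i \<and> i < int N then a (nat i) else 0)"

definition pseq :: "nat \<Rightarrow> (nat \<Rightarrow> complex) \<Rightarrow> complex \<Rightarrow> complex" where
  "pseq N a z = (\<Sum>i<N. a i * z ^ i)"

definition rev_cnj :: "nat \<Rightarrow> (nat \<Rightarrow> complex) \<Rightarrow> nat \<Rightarrow> complex" where
  "rev_cnj N a = (\<lambda>i. cnj (a (N - 1 - i)))"

end

theory Submission
  imports Defs "HOL-Computational_Algebra.Polynomial" "HOL-Library.Infinite_Set"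
begin

(* On the unit circle |p_x(z)|^2 = sum_j rho_x(j) z^j, so a pair is complementary exactly
   when |p_x|^2 + |p_y|^2 is constant there: a Laurent polynomial vanishing on the infinite
   unit circle has zero coefficients. For z on the circle and w = z^l one has
   p_(c~)(w) = w^(M-1) p_c(w)^*, and the cross terms of |p_f(z)|^2 + |p_g(z)|^2 cancel,
   leaving (|p_a|^2 + |p_b|^2)(|p_c|^2 + |p_d|^2), a product of two constants. *)

lemma cnj_mult_self_unit: "cmod z = 1 \<Longrightarrow> cnj z * z = 1"
  using complex_norm_square[of z] by (simp add: mult.commute)

lemma cnj_unit: "cmod z = 1 \<Longrightarrow> cnj z = inverse z"
  using cnj_mult_self_unit[of z] by (metis inverse_unique mult.commute)

lemma cnj_powi_mult_powi_unit:
  assumes "cmod z = 1" shows "cnj (z powi i) * z powi i' = z powi (i' - i)"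
proof -
  have "cmod (z powi i) = 1" using assms by (simp add: norm_power_int)
  then have "cnj (z powi i) = inverse (z powi i)" by (rule cnj_unit)
  moreover have "z \<noteq> 0" using assms by auto
  ultimately show ?thesis by (simp add: power_int_diff field_simps)
qed

lemma lpoly_eq_sum_superset:
  "finite U \<Longrightarrow> supp_seq x \<subseteq> U \<Longrightarrow> lpoly x z = (\<Sum>i\<in>U. x i * z powi i)"
  unfolding lpoly_def by (rule sum.mono_neutral_left) (auto simp: supp_seq_def)

lemma acorr_eq_sum_superset:
  "finite U \<Longrightarrow> supp_seq x \<subseteq> U \<Longrightarrow> acorr x j = (\<Sum>i\<in>U. cnj (x i) * x (i + j))"
  unfolding acorr_def by (rule sum.mono_neutral_left) (auto simp: supp_seq_def)

lemma fin_supp_common_bound: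
  assumes "fin_supp x" "fin_supp y"
  obtains K where "K \<ge> 0" "supp_seq x \<subseteq> {-K..K}" "supp_seq y \<subseteq> {-K..K}"
proof -
  have "finite (supp_seq x \<union> supp_seq y)" using assms by (simp add: fin_supp_def)
  then obtain k where "abs ` (supp_seq x \<union> supp_seq y) \<subseteq> {..k}"
    unfolding finite_int_iff_bounded_le by blast
  then have "supp_seq x \<union> supp_seq y \<subseteq> {-max k 0..max k 0}"
    by (force simp: abs_le_iff)
  then show thesis using that[of "max k 0"] by simp
qed

lemma acorr_eq_0_outside:
  assumes "supp_seq x \<subseteq> {-K..K}" and "j \<notin> {-(2*K)..2*K}"
  shows "acorr x j = 0"
proof -
  have "x (i + j) = 0" if "i \<in> {-K..K}" for i
    using assms that by (auto simp: supp_seq_def)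
  then show ?thesis
    by (simp add: acorr_eq_sum_superset[OF _ assms(1)])
qed

lemma cnj_lpoly_mult_lpoly:
  assumes supp: "supp_seq x \<subseteq> {-K..K}" and z: "cmod z = 1"
  shows "cnj (lpoly x z) * lpoly x z = (\<Sum>j\<in>{-(2*K)..2*K}. acorr x j * z powi j)"
proof -
  define U where "U = {-K..K}"
  define D where "D = {-(2*K)..2*K}"
  have U: "finite U" "supp_seq x \<subseteq> U" using supp by (simp_all add: U_def)
  have shift: "(\<Sum>i'\<in>U. x i' * z powi (i' - i)) = (\<Sum>j\<in>D. x (i + j) * z powi j)"
    if "i \<in> U" for i
  proof -
    have "(\<Sum>i'\<in>U. x i' * z powi (i' - i)) = (\<Sum>j\<in>(\<lambda>i'. i' - i) ` U. x (i + j) * z powi j)"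
      by (subst sum.reindex) (auto simp: inj_on_def)
    also have "\<dots> = (\<Sum>j\<in>D. x (i + j) * z powi j)"
      using that U(2) by (intro sum.mono_neutral_left)
        (force simp: U_def D_def supp_seq_def image_iff)+
    finally show ?thesis .
  qed
  have "cnj (lpoly x z) * lpoly x z
      = (\<Sum>i\<in>U. cnj (x i) * cnj (z powi i)) * (\<Sum>i'\<in>U. x i' * z powi i')"
    by (simp add: lpoly_eq_sum_superset[OF U])
  also have "\<dots> = (\<Sum>i\<in>U. \<Sum>i'\<in>U. cnj (x i) * (x i' * z powi (i' - i)))"
    unfolding sum_product cnj_powi_mult_powi_unit[OF z, symmetric] by (simp only: mult_ac)
  also have "\<dots> = (\<Sum>i\<in>U. cnj (x i) * (\<Sum>j\<in>D. x (i + j) * z powi j))"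
    by (intro sum.cong refl) (simp add: shift flip: sum_distrib_left)
  also have "\<dots> = (\<Sum>i\<in>U. \<Sum>j\<in>D. cnj (x i) * x (i + j) * z powi j)"
    by (simp add: sum_distrib_left mult.assoc)
  also have "\<dots> = (\<Sum>j\<in>D. acorr x j * z powi j)"
    by (subst sum.swap) (simp add: sum_distrib_right acorr_eq_sum_superset[OF U])
  finally show ?thesis by (simp add: D_def)
qed

lemma infinite_unit_circle: "infinite {z::complex. cmod z = 1}"
proof
  assume fin: "finite {z::complex. cmod z = 1}"
  define h where "h n = Complex (1 / (n + 1)) (sqrt (1 - (1 / (n + 1))\<^sup>2))" for n :: nat
  have "inj h" by (auto simp: h_def inj_def)
  moreover have "cmod (h n) = 1" for n
  proof -
    have "(1 / (1 + real n))\<^sup>2 \<le> 1" by (simp add: power_le_one)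
    then show ?thesis by (simp add: h_def cmod_def)
  qed
  then have "range h \<subseteq> {z. cmod z = 1}" by auto
  ultimately show False
    using fin finite_subset finite_imageD infinite_UNIV_nat by metis
qed

lemma laurent_coeffs_eq_0_if_vanishes_on_circle:
  fixes c :: "int \<Rightarrow> complex"
  assumes vanish: "\<And>z. cmod z = 1 \<Longrightarrow> (\<Sum>j\<in>{-K..K}. c j * z powi j) = 0"
    and j: "j \<in> {-K..K}"
  shows "c j = 0"
proof -
  define p where "p = (\<Sum>j\<in>{-K..K}. monom (c j) (nat (j + K)))"
  have poly_p: "poly p z = z powi K * (\<Sum>j\<in>{-K..K}. c j * z powi j)" if "z \<noteq> 0" for z
  proof -
    have "poly p z = (\<Sum>j\<in>{-K..K}. c j * z ^ nat (j + K))"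
      by (simp add: p_def poly_sum poly_monom)
    also have "\<dots> = (\<Sum>j\<in>{-K..K}. z powi K * (c j * z powi j))"
    proof (rule sum.cong)
      fix j assume "j \<in> {-K..K}"
      then have "z ^ nat (j + K) = z powi (j + K)"
        by (simp add: power_int_def)
      then show "c j * z ^ nat (j + K) = z powi K * (c j * z powi j)"
        using that by (simp add: power_int_add)
    qed simp
    also have "\<dots> = z powi K * (\<Sum>j\<in>{-K..K}. c j * z powi j)"
      by (simp add: sum_distrib_left)
    finally show ?thesis .
  qed
  have "poly p z = 0" if "cmod z = 1" for z
  proof -
    have "z \<noteq> 0" using that by auto
    then show ?thesis using poly_p vanish[OF that] by simp
  qed
  then have "{z. cmod z = 1} \<subseteq> {z. poly p z = 0}" by blast
  then have "p = 0"
    using finite_subset poly_roots_finite infinite_unit_circle by blast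
  then have "0 = coeff p (nat (j + K))" by simp
  also have "\<dots> = (\<Sum>i\<in>{-K..K}. if i = j then c i else 0)"
    unfolding p_def coeff_sum coeff_monom by (rule sum.cong) (use j in auto)
  also have "\<dots> = c j"
    using j by simp
  finally show ?thesis by simp
qed

lemma golay_pair_const_on_circle:
  assumes "fin_supp x" "fin_supp y" "golay_pair x y" "cmod z = 1"
  shows "cnj (lpoly x z) * lpoly x z + cnj (lpoly y z) * lpoly y z = acorr x 0 + acorr y 0"
proof -
  obtain K where K: "K \<ge> 0" "supp_seq x \<subseteq> {-K..K}" "supp_seq y \<subseteq> {-K..K}"
    using fin_supp_common_bound[OF assms(1,2)] .
  have "cnj (lpoly x z) * lpoly x z + cnj (lpoly y z) * lpoly y z
      = (\<Sum>j\<in>{-(2*K)..2*K}. (acorr x j + acorr y j) * z powi j)"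
    by (simp add: cnj_lpoly_mult_lpoly[OF K(2) assms(4)] cnj_lpoly_mult_lpoly[OF K(3) assms(4)]
        sum.distrib distrib_right)
  also have "\<dots> = (\<Sum>j\<in>{-(2*K)..2*K}. if j = 0 then acorr x 0 + acorr y 0 else 0)"
    using assms(3) by (intro sum.cong) (auto simp: golay_pair_def)
  finally show ?thesis using K(1) by simp
qed

lemma golay_pair_if_const_on_circle:
  assumes "fin_supp x" "fin_supp y"
    and const: "\<And>z. cmod z = 1 \<Longrightarrow> cnj (lpoly x z) * lpoly x z + cnj (lpoly y z) * lpoly y z = C"
  shows "golay_pair x y"
  unfolding golay_pair_def
proof (intro allI impI)
  fix j :: int assume "j \<noteq> 0"
  obtain K where K: "K \<ge> 0" "supp_seq x \<subseteq> {-K..K}" "supp_seq y \<subseteq> {-K..K}"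
    using fin_supp_common_bound[OF assms(1,2)] .
  define e where "e i = acorr x i + acorr y i - (if i = 0 then C else 0)" for i
  have "(\<Sum>i\<in>{-(2*K)..2*K}. e i * z powi i) = 0" if z: "cmod z = 1" for z
  proof -
    have "(\<Sum>i\<in>{-(2*K)..2*K}. e i * z powi i)
        = (\<Sum>i\<in>{-(2*K)..2*K}. acorr x i * z powi i + acorr y i * z powi i - (if i = 0 then C else 0))"
      by (intro sum.cong refl) (simp add: e_def algebra_simps)
    also have "\<dots> = cnj (lpoly x z) * lpoly x z + cnj (lpoly y z) * lpoly y z - C"
      using K(1) by (simp add: sum.distrib sum_subtractf
          cnj_lpoly_mult_lpoly[OF K(2) z] cnj_lpoly_mult_lpoly[OF K(3) z])
    finally show ?thesis using const[OF z] by simp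
  qed
  then have "e j = 0" if "j \<in> {-(2*K)..2*K}"
    using laurent_coeffs_eq_0_if_vanishes_on_circle that by blast
  then show "acorr x j + acorr y j = 0"
    using \<open>j \<noteq> 0\<close> acorr_eq_0_outside[OF K(2)] acorr_eq_0_outside[OF K(3)]
    by (cases "j \<in> {-(2*K)..2*K}") (auto simp: e_def)
qed

lemma fin_supp_seq_of: "fin_supp (seq_of N a)"
proof -
  have "supp_seq (seq_of N a) \<subseteq> {0..<int N}"
    by (auto simp: supp_seq_def seq_of_def split: if_splits)
  then show ?thesis by (simp add: fin_supp_def finite_subset)
qed

lemma lpoly_seq_of: "lpoly (seq_of N a) z = pseq N a z"
proof -
  have "lpoly (seq_of N a) z = (\<Sum>i\<in>int ` {..<N}. seq_of N a i * z powi i)"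
    by (rule lpoly_eq_sum_superset)
      (auto simp: supp_seq_def seq_of_def image_iff intro!: bexI[of _ "nat _"] split: if_splits)
  also have "\<dots> = pseq N a z"
    by (subst sum.reindex) (auto simp: pseq_def seq_of_def)
  finally show ?thesis .
qed

lemma pseq_rev_cnj_unit:
  assumes w: "cmod w = 1"
  shows "pseq M (rev_cnj M c) w = w ^ (M - 1) * cnj (pseq M c w)"
proof -
  have w0: "w \<noteq> 0" using w by auto
  have "pseq M (rev_cnj M c) w = (\<Sum>i<M. cnj (c (M - Suc i)) * w ^ (M - 1 - (M - Suc i)))"
    unfolding pseq_def rev_cnj_def by (intro sum.cong refl) (auto simp: Suc_diff_Suc)
  also have "\<dots> = (\<Sum>i<M. cnj (c i) * w ^ (M - 1 - i))"
    by (rule sum.nat_diff_reindex[where g = "\<lambda>i. cnj (c i) * w ^ (M - 1 - i)"])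
  also have "\<dots> = (\<Sum>i<M. w ^ (M - 1) * (cnj (c i) * cnj w ^ i))"
  proof (intro sum.cong refl)
    fix i assume "i \<in> {..<M}"
    then have "w ^ (M - 1 - i) = w ^ (M - 1) / w ^ i"
      using w0 power_diff[of w i "M - 1"] by (simp del: One_nat_def)
    then show "cnj (c i) * w ^ (M - 1 - i) = w ^ (M - 1) * (cnj (c i) * cnj w ^ i)"
      by (simp add: cnj_unit[OF w] field_simps power_inverse)
  qed
  also have "\<dots> = w ^ (M - 1) * cnj (pseq M c w)"
    by (simp add: pseq_def sum_distrib_left)
  finally show ?thesis .
qed

lemma golay_combination_energy:
  fixes \<xi>1 \<xi>2 u v A B C D :: complex
  assumes "cnj \<xi>1 * \<xi>1 = 1" "cnj \<xi>2 * \<xi>2 = 1" "cnj u * u = 1" "cnj v * v = 1"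
  shows "cnj (\<xi>1*A*C + \<xi>2*B*D*u) * (\<xi>1*A*C + \<xi>2*B*D*u)
    + cnj (\<xi>1*A*(v*cnj D) - \<xi>2*B*(v*cnj C)*u) * (\<xi>1*A*(v*cnj D) - \<xi>2*B*(v*cnj C)*u)
    = (cnj A*A + cnj B*B) * (cnj C*C + cnj D*D)"
  using assms by simp algebra

theorem theorem1:
  fixes N M :: nat and a b c d :: "nat \<Rightarrow> complex"
    and \<xi>1 \<xi>2 :: complex and k l m :: int and f g :: "int \<Rightarrow> complex"
  assumes "N > 0" and "M > 0"
    and "golay_pair (seq_of N a) (seq_of N b)"
    and "golay_pair (seq_of M c) (seq_of M d)"
    and "cmod \<xi>1 = 1" and "cmod \<xi>2 = 1"
    and "fin_supp f" and "fin_supp g"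
    and "\<forall>z. z \<noteq> 0 \<longrightarrow> lpoly f z =
           \<xi>1 * pseq N a (z powi k) * pseq M c (z powi l)
         + \<xi>2 * pseq N b (z powi k) * pseq M d (z powi l) * z powi m"
    and "\<forall>z. z \<noteq> 0 \<longrightarrow> lpoly g z =
           \<xi>1 * pseq N a (z powi k) * pseq M (rev_cnj M d) (z powi l)
         - \<xi>2 * pseq N b (z powi k) * pseq M (rev_cnj M c) (z powi l) * z powi m"
  shows "golay_pair f g"
proof (rule golay_pair_if_const_on_circle[OF assms(7,8)])
  fix z :: complex assume z: "cmod z = 1"
  let ?A = "pseq N a (z powi k)" and ?B = "pseq N b (z powi k)"
    and ?C = "pseq M c (z powi l)" and ?D = "pseq M d (z powi l)"
    and ?u = "z powi m" and ?v = "(z powi l) ^ (M - 1)"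
  have unit: "cmod (z powi k) = 1" "cmod (z powi l) = 1"
    using z by (simp_all add: norm_power_int)
  have "z \<noteq> 0" using z by auto
  have f: "lpoly f z = \<xi>1*?A*?C + \<xi>2*?B*?D*?u"
    using assms(9) \<open>z \<noteq> 0\<close> by simp
  have g: "lpoly g z = \<xi>1*?A*(?v*cnj ?D) - \<xi>2*?B*(?v*cnj ?C)*?u"
    using assms(10) \<open>z \<noteq> 0\<close> by (simp add: pseq_rev_cnj_unit[OF unit(2)])
  have "cnj (lpoly f z) * lpoly f z + cnj (lpoly g z) * lpoly g z
      = (cnj ?A*?A + cnj ?B*?B) * (cnj ?C*?C + cnj ?D*?D)"
    unfolding f g
    by (rule golay_combination_energy; rule cnj_mult_self_unit)
      (simp_all add: assms(5,6) z norm_power norm_power_int)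
  also have "\<dots> = (acorr (seq_of N a) 0 + acorr (seq_of N b) 0)
      * (acorr (seq_of M c) 0 + acorr (seq_of M d) 0)"
    using golay_pair_const_on_circle[OF fin_supp_seq_of fin_supp_seq_of assms(3) unit(1)]
      golay_pair_const_on_circle[OF fin_supp_seq_of fin_supp_seq_of assms(4) unit(2)]
    by (simp add: lpoly_seq_of)
  finally show "cnj (lpoly f z) * lpoly f z + cnj (lpoly g z) * lpoly g z = \<dots>" .
qed

end
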